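(* Let $\mathcal V$ be a multivector field on $X$, assume $X$ is invariant, and let $\mathcal M=\{M_p\mid p\in\mathbb P\}$ be a Morse decomposition of $X$ indexed by a finite poset $(\mathbb P,\le)$. If $I\subset\mathbb P$ is convex, then $(M(I^{\le}),M(I^{<}))$ is an index pair for the isolated invariant set $M(I)$.
   Context: $X$ is a finite $T_0$ topological space. For $A\subset X$, $\operatorname{cl}A$ is its closure and $\operatorname{mo}A:=\operatorname{cl}A\setminus A$. $A$ is locally closed if it is the intersection of an open and a closed subset of $X$. $H$ denotes relative singular homology. A multivector is a nonempty locally closed subset of $X$; a multivector field $\mathcal V$ on $X$ is a partition of $X$ into multivectors. For $x\in X$, $[x]$ denotes the element of $\mathcal V$ containing $x$. A multivector $V$ is critical if $H(\operatorname{cl}V,\operatorname{mo}V)\neq0$, regular otherwise. $A\subset X$ is $\mathcal V$-compatible if for every $x\in X$ either $[x]\cap A=\emptyset$ or $[x]\subset A$. Put $\Pi_{\mathcal V}(x):=[x]\cup\operatorname{cl}\{x\}$ and $\Pi_{\mathcal V}(A):=\bigcup_{x\in A}\Pi_{\mathcal V}(x)$. A $\mathbb Z$-interval is $\mathbb Z\cap I$ for a real interval $I$. A solution in $A\subset X$ is a map $\varphi:D\to A$ on a $\mathbb Z$-interval $D$ with $\varphi(i+1)\in\Pi_{\mathcal V}(\varphi(i))$ whenever $i,i+1\in D$; it is full if $D=\mathbb Z$, and a path if $D$ is bounded, its endpoints being $\varphi(\min D)$ and $\varphi(\max D)$. A full solution $\varphi$ is essential if for every $t\in\mathbb Z$ with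 $[\varphi(t)]$ regular, the set $\{s\in\mathbb Z:\varphi(s)\notin[\varphi(t)]\}$ is unbounded below and unbounded above. $\operatorname{Inv}A$ is the set of $x\in A$ such that there is an essential full solution $\varphi$ with image in $A$ and $\varphi(0)=x$; $A$ is invariant if $\operatorname{Inv}A=A$. A closed set $N$ isolates an invariant set $S\subset N$ if (a) every path in $N$ with both endpoints in $S$ has image contained in $S$, and (b) $\Pi_{\mathcal V}(S)\subset N$. An invariant set is an isolated invariant set if some closed set isolates it. For a full solution $\varphi$: $\operatorname{uim}^-\varphi:=\bigcap_{t\le0}\varphi((-\infty,t])$, $\operatorname{uim}^+\varphi:=\bigcap_{t\ge0}\varphi([t,\infty))$; the $\mathcal V$-hull $\langle A\rangle_{\mathcal V}$ is the intersection of all $\mathcal V$-compatible locally closed sets containing $A$; $\alpha(\varphi):=\langle\operatorname{uim}^-\varphi\rangle_{\mathcal V}$, $\omega(\varphi):=\langle\operatorname{uim}^+\varphi\rangle_{\mathcal V}$. For invariant $X$ and a finite poset $(\mathbb P,\le)$, a family $\mathcal M=\{M_p\mid p\in\mathbb P\}$ is a Morse decomposition of $X$ if (i) the $M_p$ are mutually disjoint isolated invariant subsets of $X$, and (ii) for every essential full solution $\varphi$ in $X$ either $\operatorname{im}\varphi\subset M_r$ for some $r\in\mathbb P$, or there exist $p,q\in\mathbb P$ with $q>p$, $\alpha(\varphi)\subset M_q$ and $\omega(\varphi)\subset M_p$. For $A,B\subset X$ the connection set $C(A,B)$ is the set of $x\in X$ for which there is an essential full solution $\varphi$ in $X$ with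 $\varphi(0)=x$, $\alpha(\varphi)\subset A$, $\omega(\varphi)\subset B$. For $I\subset\mathbb P$, $M(I):=\bigcup_{i,j\in I}C(M_i,M_j)$ (an isolated invariant set). $I$ is convex if $a\le b\le c$ with $a,c\in I$ implies $b\in I$; $I^{\le}:=\{a\in\mathbb P:\exists b\in I,\ a\le b\}$ and $I^<:=I^{\le}\setminus I$. An index pair for an isolated invariant set $S$ is a pair $(P_1,P_2)$ of closed subsets of $X$ with $P_2\subset P_1$ such that (IP1) if $x\in P_2$ and $y\in\Pi_{\mathcal V}(x)\cap P_1$ then $y\in P_2$; (IP2) if $x\in P_1$ and $\Pi_{\mathcal V}(x)\setminus P_1\neq\emptyset$ then $x\in P_2$; (IP3) $S=\operatorname{Inv}(P_1\setminus P_2)$. *)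

theory Defs
  imports "HOL-Analysis.Analysis" "HOL-Homology.Homology"
begin

definition mo :: "'a topology \<Rightarrow> 'a set \<Rightarrow> 'a set" where
  "mo X A = (X closure_of A) - A"

definition loc_closed :: "'a topology \<Rightarrow> 'a set \<Rightarrow> bool" where
  "loc_closed X A \<longleftrightarrow> (\<exists>U C. openin X U \<and> closedin X C \<and> A = U \<inter> C)"

definition multivector :: "'a topology \<Rightarrow> 'a set \<Rightarrow> bool" where
  "multivector X A \<longleftrightarrow> A \<noteq> {} \<and> loc_closed X A"

definition multivector_field :: "'a topology \<Rightarrow> 'a set set \<Rightarrow> bool" where
  "multivector_field X V \<longleftrightarrow>
     (\<forall>W\<in>V. multivector X W) \<and> \<Union>V = topspace X \<and>
     (\<forall>W1\<in>V. \<forall>W2\<in>V. W1 \<noteq> W2 \<longrightarrow> W1 \<inter> W2 = {})"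

definition cell :: "'a set set \<Rightarrow> 'a \<Rightarrow> 'a set" where
  "cell V x = \<Union>{W\<in>V. x \<in> W}"

definition critical :: "'a topology \<Rightarrow> 'a set \<Rightarrow> bool" where
  "critical X A \<longleftrightarrow>
     (\<exists>p. \<not> trivial_group (relative_homology_group p (subtopology X (X closure_of A)) (mo X A)))"

definition regular :: "'a topology \<Rightarrow> 'a set \<Rightarrow> bool" where
  "regular X A \<longleftrightarrow> \<not> critical X A"

definition compatible :: "'a topology \<Rightarrow> 'a set set \<Rightarrow> 'a set \<Rightarrow> bool" where
  "compatible X V A \<longleftrightarrow> (\<forall>x\<in>topspace X. cell V x \<inter> A = {} \<or> cell V x \<subseteq> A)"

definition PiV :: "'a topology \<Rightarrow> 'a set set \<Rightarrow> 'a \<Rightarrow> 'a set" where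
  "PiV X V x = cell V x \<union> X closure_of {x}"

definition PiV_set :: "'a topology \<Rightarrow> 'a set set \<Rightarrow> 'a set \<Rightarrow> 'a set" where
  "PiV_set X V A = (\<Union>x\<in>A. PiV X V x)"

definition solution :: "'a topology \<Rightarrow> 'a set set \<Rightarrow> 'a set \<Rightarrow> int set \<Rightarrow> (int \<Rightarrow> 'a) \<Rightarrow> bool" where
  "solution X V A D \<phi> \<longleftrightarrow>
     (\<forall>i\<in>D. \<phi> i \<in> A) \<and> (\<forall>i. i \<in> D \<and> i + 1 \<in> D \<longrightarrow> \<phi> (i + 1) \<in> PiV X V (\<phi> i))"

definition full_solution :: "'a topology \<Rightarrow> 'a set set \<Rightarrow> 'a set \<Rightarrow> (int \<Rightarrow> 'a) \<Rightarrow> bool" where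
  "full_solution X V A \<phi> \<longleftrightarrow> solution X V A UNIV \<phi>"

definition essential :: "'a topology \<Rightarrow> 'a set set \<Rightarrow> (int \<Rightarrow> 'a) \<Rightarrow> bool" where
  "essential X V \<phi> \<longleftrightarrow>
     (\<forall>t. regular X (cell V (\<phi> t)) \<longrightarrow>
        (\<forall>m. \<exists>s. s < m \<and> \<phi> s \<notin> cell V (\<phi> t)) \<and>
        (\<forall>m. \<exists>s. s > m \<and> \<phi> s \<notin> cell V (\<phi> t)))"

definition ess_full_solution :: "'a topology \<Rightarrow> 'a set set \<Rightarrow> 'a set \<Rightarrow> (int \<Rightarrow> 'a) \<Rightarrow> bool" where
  "ess_full_solution X V A \<phi> \<longleftrightarrow> full_solution X V A \<phi> \<and> essential X V \<phi>"

definition Inv :: "'a topology \<Rightarrow> 'a set set \<Rightarrow> 'a set \<Rightarrow> 'a set" where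
  "Inv X V A = {x \<in> A. \<exists>\<phi>. ess_full_solution X V A \<phi> \<and> \<phi> 0 = x}"

definition invariant :: "'a topology \<Rightarrow> 'a set set \<Rightarrow> 'a set \<Rightarrow> bool" where
  "invariant X V A \<longleftrightarrow> Inv X V A = A"

text \<open>Paths: solutions on a bounded nonempty Z-interval {a..b}.\<close>
definition isolates :: "'a topology \<Rightarrow> 'a set set \<Rightarrow> 'a set \<Rightarrow> 'a set \<Rightarrow> bool" where
  "isolates X V N S \<longleftrightarrow> closedin X N \<and> S \<subseteq> N \<and>
     (\<forall>a b \<phi>. a \<le> b \<and> solution X V N {a..b} \<phi> \<and> \<phi> a \<in> S \<and> \<phi> b \<in> S \<longrightarrow> \<phi> ` {a..b} \<subseteq> S) \<and>
     PiV_set X V S \<subseteq> N"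

definition isolated_invariant :: "'a topology \<Rightarrow> 'a set set \<Rightarrow> 'a set \<Rightarrow> bool" where
  "isolated_invariant X V S \<longleftrightarrow> S \<subseteq> topspace X \<and> invariant X V S \<and> (\<exists>N. isolates X V N S)"

definition uim_minus :: "(int \<Rightarrow> 'a) \<Rightarrow> 'a set" where
  "uim_minus \<phi> = (\<Inter>t\<in>{..0}. \<phi> ` {..t})"

definition uim_plus :: "(int \<Rightarrow> 'a) \<Rightarrow> 'a set" where
  "uim_plus \<phi> = (\<Inter>t\<in>{0..}. \<phi> ` {t..})"

definition vhull :: "'a topology \<Rightarrow> 'a set set \<Rightarrow> 'a set \<Rightarrow> 'a set" where
  "vhull X V A = \<Inter>{U. U \<subseteq> topspace X \<and> compatible X V U \<and> loc_closed X U \<and> A \<subseteq> U}"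

definition alpha_lim :: "'a topology \<Rightarrow> 'a set set \<Rightarrow> (int \<Rightarrow> 'a) \<Rightarrow> 'a set" where
  "alpha_lim X V \<phi> = vhull X V (uim_minus \<phi>)"

definition omega_lim :: "'a topology \<Rightarrow> 'a set set \<Rightarrow> (int \<Rightarrow> 'a) \<Rightarrow> 'a set" where
  "omega_lim X V \<phi> = vhull X V (uim_plus \<phi>)"

text \<open>Morse decomposition indexed by a finite poset (P, R), R the order relation (pairs (a,b) with a \<le> b).\<close>
definition morse_decomposition ::
  "'a topology \<Rightarrow> 'a set set \<Rightarrow> 'p set \<Rightarrow> ('p \<times> 'p) set \<Rightarrow> ('p \<Rightarrow> 'a set) \<Rightarrow> bool" where
  "morse_decomposition X V P R M \<longleftrightarrow>
     (\<forall>p\<in>P. \<forall>q\<in>P. p \<noteq> q \<longrightarrow> M p \<inter> M q = {}) \<and>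
     (\<forall>p\<in>P. isolated_invariant X V (M p)) \<and>
     (\<forall>\<phi>. ess_full_solution X V (topspace X) \<phi> \<longrightarrow>
        (\<exists>r\<in>P. range \<phi> \<subseteq> M r) \<or>
        (\<exists>p\<in>P. \<exists>q\<in>P. (p, q) \<in> R \<and> q \<noteq> p \<and> alpha_lim X V \<phi> \<subseteq> M q \<and> omega_lim X V \<phi> \<subseteq> M p))"

definition connection_set :: "'a topology \<Rightarrow> 'a set set \<Rightarrow> 'a set \<Rightarrow> 'a set \<Rightarrow> 'a set" where
  "connection_set X V A B = {x. \<exists>\<phi>. ess_full_solution X V (topspace X) \<phi> \<and> \<phi> 0 = x \<and>
                                   alpha_lim X V \<phi> \<subseteq> A \<and> omega_lim X V \<phi> \<subseteq> B}"

definition MI :: "'a topology \<Rightarrow> 'a set set \<Rightarrow> ('p \<Rightarrow> 'a set) \<Rightarrow> 'p set \<Rightarrow> 'a set" where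
  "MI X V M I = (\<Union>i\<in>I. \<Union>j\<in>I. connection_set X V (M i) (M j))"

definition convex_in :: "'p set \<Rightarrow> ('p \<times> 'p) set \<Rightarrow> 'p set \<Rightarrow> bool" where
  "convex_in P R I \<longleftrightarrow> (\<forall>a\<in>I. \<forall>b\<in>P. \<forall>c\<in>I. (a, b) \<in> R \<and> (b, c) \<in> R \<longrightarrow> b \<in> I)"

definition down_le :: "'p set \<Rightarrow> ('p \<times> 'p) set \<Rightarrow> 'p set \<Rightarrow> 'p set" where
  "down_le P R I = {a\<in>P. \<exists>b\<in>I. (a, b) \<in> R}"

definition down_lt :: "'p set \<Rightarrow> ('p \<times> 'p) set \<Rightarrow> 'p set \<Rightarrow> 'p set" where
  "down_lt P R I = down_le P R I - I"

definition index_pair :: "'a topology \<Rightarrow> 'a set set \<Rightarrow> 'a set \<Rightarrow> 'a set \<Rightarrow> 'a set \<Rightarrow> bool" where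
  "index_pair X V P1 P2 S \<longleftrightarrow>
     closedin X P1 \<and> closedin X P2 \<and> P2 \<subseteq> P1 \<and>
     (\<forall>x\<in>P2. \<forall>y\<in>PiV X V x \<inter> P1. y \<in> P2) \<and>
     (\<forall>x\<in>P1. PiV X V x - P1 \<noteq> {} \<longrightarrow> x \<in> P2) \<and>
     S = Inv X V (P1 - P2)"

end

theory Submission
  imports Defs
begin

text \<open>
  For a down-closed set of indices \<open>J\<close> the set \<open>M(J)\<close> is forward invariant: if \<open>x\<close> lies
  on a connection starting in \<open>M\<^sub>i\<close>, \<open>i \<in> J\<close>, and \<open>y \<in> \<Pi>(x)\<close>, then following that connection
  up to \<open>x\<close> and continuing with any essential solution through \<open>y\<close> gives an essential
  solution through \<open>y\<close> whose \<open>\<omega>\<close>-limit lies in some \<open>M\<^sub>k\<close>, and the Morse order forces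
  \<open>k \<le> i\<close>, hence \<open>k \<in> J\<close>. In a finite space forward invariance gives closedness, and for
  \<open>J = I\<^sup>\<le>, I\<^sup><\<close> it gives (IP1) and (IP2). For (IP3), the limit points of a solution in
  \<open>M(I\<^sup>\<le>) - M(I\<^sup><)\<close> lie in Morse sets whose indices, by the same gluing argument, are
  in \<open>I\<^sup>\<le>\<close> but not in \<open>I\<^sup><\<close>; conversely, convexity of \<open>I\<close> rules out a point of \<open>M(I)\<close>
  lying on a connection that starts in \<open>M(I\<^sup><)\<close>.
\<close>

lemma uim_minus_iff: "y \<in> uim_minus \<phi> \<longleftrightarrow> (\<forall>t. \<exists>s\<le>t. \<phi> s = y)"
proof
  assume "y \<in> uim_minus \<phi>"
  then have "y \<in> \<phi> ` {..min t 0}" for t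
    unfolding uim_minus_def by auto
  then show "\<forall>t. \<exists>s\<le>t. \<phi> s = y"
    by (metis atMost_iff imageE min.bounded_iff)
qed (fastforce simp: uim_minus_def)

lemma uim_plus_iff: "y \<in> uim_plus \<phi> \<longleftrightarrow> (\<forall>t. \<exists>s\<ge>t. \<phi> s = y)"
proof
  assume "y \<in> uim_plus \<phi>"
  then have "y \<in> \<phi> ` {max t 0..}" for t
    unfolding uim_plus_def by auto
  then show "\<forall>t. \<exists>s\<ge>t. \<phi> s = y"
    by (metis atLeast_iff imageE max.bounded_iff)
qed (fastforce simp: uim_plus_def)

lemma uim_minus_subset_range: "uim_minus \<phi> \<subseteq> range \<phi>"
  by (clarsimp simp: uim_minus_iff) (metis rangeI)

lemma uim_plus_subset_range: "uim_plus \<phi> \<subseteq> range \<phi>"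
  by (clarsimp simp: uim_plus_iff) (metis rangeI)

lemma uim_minus_nonempty:
  assumes "finite (range \<phi>)"
  shows "uim_minus \<phi> \<noteq> {}"
proof
  assume "uim_minus \<phi> = {}"
  then have "\<forall>y. \<exists>t. \<forall>s\<le>t. \<phi> s \<noteq> y"
    by (auto simp: uim_minus_iff)
  then obtain f where f: "\<And>y s. s \<le> f y \<Longrightarrow> \<phi> s \<noteq> y"
    by metis
  have "Min (f ` range \<phi>) \<le> f (\<phi> (Min (f ` range \<phi>)))"
    using assms by (intro Min_le) auto
  then show False
    using f by blast
qed

lemma uim_plus_nonempty:
  assumes "finite (range \<phi>)"
  shows "uim_plus \<phi> \<noteq> {}"
proof
  assume "uim_plus \<phi> = {}"
  then have "\<forall>y. \<exists>t. \<forall>s\<ge>t. \<phi> s \<noteq> y"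
    by (auto simp: uim_plus_iff)
  then obtain f where f: "\<And>y s. s \<ge> f y \<Longrightarrow> \<phi> s \<noteq> y"
    by metis
  have "Max (f ` range \<phi>) \<ge> f (\<phi> (Max (f ` range \<phi>)))"
    using assms by (intro Max_ge) auto
  then show False
    using f by blast
qed

lemma uim_minus_cong_tail:
  assumes "\<And>s. s \<le> a \<Longrightarrow> \<phi> s = \<psi> (s + k)"
  shows "uim_minus \<phi> = uim_minus \<psi>"
proof -
  have "(\<forall>t. \<exists>s\<le>t. \<phi> s = y) \<longleftrightarrow> (\<forall>t. \<exists>s\<le>t. \<psi> s = y)" for y
  proof safe
    fix t assume "\<forall>t. \<exists>s\<le>t. \<phi> s = y"
    then obtain s where "s \<le> min a (t - k)" "\<phi> s = y"
      by blast
    with assms show "\<exists>s\<le>t. \<psi> s = y"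
      by (intro exI[of _ "s + k"]) auto
  next
    fix t assume "\<forall>t. \<exists>s\<le>t. \<psi> s = y"
    then obtain s where "s \<le> min (a + k) (t + k)" "\<psi> s = y"
      by blast
    with assms[of "s - k"] show "\<exists>s\<le>t. \<phi> s = y"
      by (intro exI[of _ "s - k"]) auto
  qed
  then show ?thesis
    by (auto simp: uim_minus_iff)
qed

lemma uim_plus_cong_tail:
  assumes "\<And>s. s \<ge> a \<Longrightarrow> \<phi> s = \<psi> (s + k)"
  shows "uim_plus \<phi> = uim_plus \<psi>"
proof -
  have "(\<forall>t. \<exists>s\<ge>t. \<phi> s = y) \<longleftrightarrow> (\<forall>t. \<exists>s\<ge>t. \<psi> s = y)" for y
  proof safe
    fix t assume "\<forall>t. \<exists>s\<ge>t. \<phi> s = y"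
    then obtain s where "s \<ge> max a (t - k)" "\<phi> s = y"
      by blast
    with assms show "\<exists>s\<ge>t. \<psi> s = y"
      by (intro exI[of _ "s + k"]) auto
  next
    fix t assume "\<forall>t. \<exists>s\<ge>t. \<psi> s = y"
    then obtain s where "s \<ge> max (a + k) (t + k)" "\<psi> s = y"
      by blast
    with assms[of "s - k"] show "\<exists>s\<ge>t. \<phi> s = y"
      by (intro exI[of _ "s - k"]) auto
  qed
  then show ?thesis
    by (auto simp: uim_plus_iff)
qed

lemma cell_eq:
  assumes "multivector_field X V" "x \<in> cell V y"
  shows "cell V x = cell V y"
  using assms unfolding cell_def multivector_field_def by blast

lemma essential_iff_cells:
  assumes "multivector_field X V"
  shows "essential X V \<phi> \<longleftrightarrow>
    (\<forall>z. regular X (cell V z) \<longrightarrow>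
       (\<forall>m. \<exists>s<m. \<phi> s \<notin> cell V z) \<and> (\<forall>m. \<exists>s>m. \<phi> s \<notin> cell V z))"
proof
  assume ess: "essential X V \<phi>"
  have backward: "\<exists>s<m. \<phi> s \<notin> cell V z" if "regular X (cell V z)" for z m
  proof (rule ccontr)
    assume "\<not> (\<exists>s<m. \<phi> s \<notin> cell V z)"
    then have inside: "\<forall>s<m. \<phi> s \<in> cell V z"
      by auto
    then have "cell V (\<phi> (m - 1)) = cell V z"
      using cell_eq[OF assms] by simp
    with ess that inside show False
      unfolding essential_def by metis
  qed
  have forward: "\<exists>s>m. \<phi> s \<notin> cell V z" if "regular X (cell V z)" for z m
  proof (rule ccontr)
    assume "\<not> (\<exists>s>m. \<phi> s \<notin> cell V z)"
    then have inside: "\<forall>s>m. \<phi> s \<in> cell V z"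
      by auto
    then have "cell V (\<phi> (m + 1)) = cell V z"
      using cell_eq[OF assms] by simp
    with ess that inside show False
      unfolding essential_def by metis
  qed
  show "\<forall>z. regular X (cell V z) \<longrightarrow>
       (\<forall>m. \<exists>s<m. \<phi> s \<notin> cell V z) \<and> (\<forall>m. \<exists>s>m. \<phi> s \<notin> cell V z)"
    using backward forward by blast
qed (auto simp: essential_def)

lemma essential_cong_tails:
  assumes "multivector_field X V" "essential X V \<phi>" "essential X V \<psi>"
    and "\<And>s. s \<le> a \<Longrightarrow> \<gamma> s = \<phi> (s + k)" and "\<And>s. s \<ge> b \<Longrightarrow> \<gamma> s = \<psi> (s + l)"
  shows "essential X V \<gamma>"
  unfolding essential_iff_cells[OF assms(1)]
proof (intro allI impI conjI)
  fix z m assume regular: "regular X (cell V z)"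
  obtain s where "s < min (m + k) (a + k + 1)" "\<phi> s \<notin> cell V z"
    using assms(2) regular unfolding essential_iff_cells[OF assms(1)] by blast
  with assms(4)[of "s - k"] show "\<exists>s<m. \<gamma> s \<notin> cell V z"
    by (intro exI[of _ "s - k"]) auto
next
  fix z m assume regular: "regular X (cell V z)"
  obtain s where "s > max (m + l) (b + l)" "\<psi> s \<notin> cell V z"
    using assms(3) regular unfolding essential_iff_cells[OF assms(1)] by blast
  with assms(5)[of "s - l"] show "\<exists>s>m. \<gamma> s \<notin> cell V z"
    by (intro exI[of _ "s - l"]) auto
qed

definition shift :: "int \<Rightarrow> (int \<Rightarrow> 'a) \<Rightarrow> int \<Rightarrow> 'a" where
  "shift k \<phi> = (\<lambda>s. \<phi> (s + k))"

definition glue :: "int \<Rightarrow> (int \<Rightarrow> 'a) \<Rightarrow> (int \<Rightarrow> 'a) \<Rightarrow> int \<Rightarrow> 'a" where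
  "glue t \<phi> \<psi> = (\<lambda>s. if s \<le> t then \<phi> s else \<psi> s)"

lemma ess_full_solution_step:
  "ess_full_solution X V A \<phi> \<Longrightarrow> \<phi> (t + 1) \<in> PiV X V (\<phi> t)"
  unfolding ess_full_solution_def full_solution_def solution_def by auto

lemma ess_full_solution_range:
  "ess_full_solution X V A \<phi> \<Longrightarrow> range \<phi> \<subseteq> A"
  unfolding ess_full_solution_def full_solution_def solution_def by auto

lemma ess_full_solution_mono:
  "A \<subseteq> B \<Longrightarrow> ess_full_solution X V A \<phi> \<Longrightarrow> ess_full_solution X V B \<phi>"
  unfolding ess_full_solution_def full_solution_def solution_def by auto

lemma ess_full_solution_restrict:
  "ess_full_solution X V A \<phi> \<Longrightarrow> range \<phi> \<subseteq> B \<Longrightarrow> ess_full_solution X V B \<phi>"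
  unfolding ess_full_solution_def full_solution_def solution_def by auto

lemma ess_full_solution_shift:
  assumes "multivector_field X V" "ess_full_solution X V A \<phi>"
  shows "ess_full_solution X V A (shift k \<phi>)"
proof -
  have ess: "essential X V \<phi>"
    using assms(2) by (simp add: ess_full_solution_def)
  have "full_solution X V A (shift k \<phi>)"
    using assms(2) unfolding ess_full_solution_def full_solution_def solution_def shift_def
    by (metis UNIV_I add.commute add.left_commute)
  moreover have "essential X V (shift k \<phi>)"
    by (rule essential_cong_tails[OF assms(1) ess ess, where a = 0 and b = 0 and k = k and l = k])
      (simp_all add: shift_def)
  ultimately show ?thesis
    by (simp add: ess_full_solution_def)
qed

lemma ess_full_solution_glue:
  assumes "multivector_field X V" "ess_full_solution X V A \<phi>" "ess_full_solution X V A \<psi>"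
    and "\<psi> (t + 1) \<in> PiV X V (\<phi> t)"
  shows "ess_full_solution X V A (glue t \<phi> \<psi>)"
proof -
  have ess: "essential X V \<phi>" "essential X V \<psi>"
    using assms(2,3) by (simp_all add: ess_full_solution_def)
  have "glue t \<phi> \<psi> (i + 1) \<in> PiV X V (glue t \<phi> \<psi> i)" for i
    using assms(4) ess_full_solution_step[OF assms(2), of i] ess_full_solution_step[OF assms(3), of i]
    by (cases "i + 1 \<le> t"; cases "i = t") (auto simp: glue_def)
  then have "full_solution X V A (glue t \<phi> \<psi>)"
    using ess_full_solution_range[OF assms(2)] ess_full_solution_range[OF assms(3)]
    unfolding full_solution_def solution_def glue_def by auto
  moreover have "essential X V (glue t \<phi> \<psi>)"
    by (rule essential_cong_tails[OF assms(1) ess, where a = t and b = "t + 1" and k = 0 and l = 0])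
      (simp_all add: glue_def)
  ultimately show ?thesis
    by (simp add: ess_full_solution_def)
qed

lemma alpha_lim_shift: "alpha_lim X V (shift k \<phi>) = alpha_lim X V \<phi>"
  unfolding alpha_lim_def by (rule arg_cong[OF uim_minus_cong_tail[where a = 0 and k = k]])
    (simp add: shift_def)

lemma omega_lim_shift: "omega_lim X V (shift k \<phi>) = omega_lim X V \<phi>"
  unfolding omega_lim_def by (rule arg_cong[OF uim_plus_cong_tail[where a = 0 and k = k]])
    (simp add: shift_def)

lemma alpha_lim_glue: "alpha_lim X V (glue t \<phi> \<psi>) = alpha_lim X V \<phi>"
  unfolding alpha_lim_def by (rule arg_cong[OF uim_minus_cong_tail[where a = t and k = 0]])
    (simp add: glue_def)

lemma omega_lim_glue: "omega_lim X V (glue t \<phi> \<psi>) = omega_lim X V \<psi>"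
  unfolding omega_lim_def by (rule arg_cong[OF uim_plus_cong_tail[where a = "t + 1" and k = 0]])
    (simp add: glue_def)

lemma mem_connection_set_shift:
  assumes "multivector_field X V" "ess_full_solution X V (topspace X) \<phi>"
    and "alpha_lim X V \<phi> \<subseteq> A" "omega_lim X V \<phi> \<subseteq> B"
  shows "\<phi> t \<in> connection_set X V A B"
proof -
  have "shift t \<phi> 0 = \<phi> t"
    by (simp add: shift_def)
  with assms ess_full_solution_shift[OF assms(1,2), of t]
    alpha_lim_shift[of X V t \<phi>] omega_lim_shift[of X V t \<phi>]
  show ?thesis
    unfolding connection_set_def by (intro CollectI exI[of _ "shift t \<phi>"]) auto
qed

lemma glue_mem_connection_set:
  assumes "multivector_field X V"
    and "ess_full_solution X V (topspace X) \<phi>" "alpha_lim X V \<phi> \<subseteq> A"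
    and "ess_full_solution X V (topspace X) \<psi>" "omega_lim X V \<psi> \<subseteq> B"
    and "\<psi> (t + 1) \<in> PiV X V (\<phi> t)"
  shows "glue t \<phi> \<psi> s \<in> connection_set X V A B"
  using mem_connection_set_shift[OF assms(1) ess_full_solution_glue[OF assms(1,2,4,6)]] assms(3,5)
  by (simp add: alpha_lim_glue omega_lim_glue)

lemma mem_connection_set_through:
  assumes "multivector_field X V"
    and "ess_full_solution X V (topspace X) \<phi>" "\<phi> 0 = x" "alpha_lim X V \<phi> \<subseteq> A"
    and "ess_full_solution X V (topspace X) \<psi>" "\<psi> 0 = x" "omega_lim X V \<psi> \<subseteq> B"
  shows "x \<in> connection_set X V A B"
proof -
  have "\<psi> (0 + 1) \<in> PiV X V (\<phi> 0)"
    using ess_full_solution_step[OF assms(5), of 0] assms(3,6) by simp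
  from glue_mem_connection_set[OF assms(1,2,4,5,7) this, of 0] assms(3)
  show ?thesis
    by (simp add: glue_def)
qed

lemma isolates_middle:
  assumes "isolates X V N S" "x \<in> S" "z \<in> S" "y \<in> PiV X V x" "z \<in> PiV X V y"
  shows "y \<in> S"
proof -
  have iso: "\<And>a b \<phi>. a \<le> b \<Longrightarrow> solution X V N {a..b} \<phi> \<Longrightarrow> \<phi> a \<in> S \<Longrightarrow> \<phi> b \<in> S \<Longrightarrow> \<phi> ` {a..b} \<subseteq> S"
    and "S \<subseteq> N" "PiV_set X V S \<subseteq> N"
    using assms(1) unfolding isolates_def by blast+
  then have "x \<in> N" "y \<in> N" "z \<in> N"
    using assms(2-4) unfolding PiV_set_def by blast+
  define \<phi> where "\<phi> = (\<lambda>i::int. if i = 0 then x else if i = 1 then y else z)"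
  have "solution X V N {0..2} \<phi>"
    using \<open>x \<in> N\<close> \<open>y \<in> N\<close> \<open>z \<in> N\<close> assms(4,5) unfolding solution_def \<phi>_def by auto
  then have "\<phi> ` {0..2} \<subseteq> S"
    using iso[of 0 2 \<phi>] by (simp add: \<phi>_def assms(2,3))
  then show ?thesis
    by (force simp: \<phi>_def)
qed

lemma isolated_invariant_compatible:
  assumes "multivector_field X V" "isolated_invariant X V S"
  shows "compatible X V S"
proof -
  obtain N where N: "isolates X V N S"
    using assms(2) unfolding isolated_invariant_def by blast
  have "cell V x \<subseteq> S" if "z \<in> cell V x" "z \<in> S" for x z
  proof
    fix y assume "y \<in> cell V x"
    then have "y \<in> PiV X V z" "z \<in> PiV X V y"
      using that cell_eq[OF assms(1)] unfolding PiV_def by auto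
    then show "y \<in> S"
      using isolates_middle[OF N \<open>z \<in> S\<close> \<open>z \<in> S\<close>] by blast
  qed
  then show ?thesis
    unfolding compatible_def by blast
qed

lemma closure_of_finite_eq_UN:
  "finite T \<Longrightarrow> X closure_of T = (\<Union>t\<in>T. X closure_of {t})"
  using closure_of_Union[of "(\<lambda>t. {t}) ` T" X] by simp

text \<open>A subset of a finite space that is convex for the specialization preorder is the
  intersection of its closure with the open complement of the closure of its mouth.\<close>
lemma loc_closed_if_specialization_convex:
  assumes "finite (topspace X)" "S \<subseteq> topspace X"
    and convex: "\<And>a a' m. a \<in> S \<Longrightarrow> a' \<in> S \<Longrightarrow> m \<in> X closure_of {a'} \<Longrightarrow> a \<in> X closure_of {m} \<Longrightarrow> m \<in> S"
  shows "loc_closed X S"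
proof -
  have mo_topspace: "mo X S \<subseteq> topspace X"
    using closure_of_subset_topspace[of X S] unfolding mo_def by blast
  have finite_S: "finite S" and finite_mo: "finite (mo X S)"
    using finite_subset[OF assms(2,1)] finite_subset[OF mo_topspace assms(1)] .
  have "a \<notin> X closure_of mo X S" if "a \<in> S" for a
  proof
    assume "a \<in> X closure_of mo X S"
    then obtain m where m: "m \<in> mo X S" "a \<in> X closure_of {m}"
      using closure_of_finite_eq_UN[OF finite_mo] by blast
    then obtain a' where "a' \<in> S" "m \<in> X closure_of {a'}"
      using closure_of_finite_eq_UN[OF finite_S] unfolding mo_def by blast
    with convex[OF that _ _ m(2)] m(1) show False
      unfolding mo_def by blast
  qed
  then have "S = (topspace X - X closure_of mo X S) \<inter> X closure_of S"
    using assms(2) closure_of_subset[OF assms(2)] closure_of_subset[OF mo_topspace]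
    unfolding mo_def by blast
  moreover have "openin X (topspace X - X closure_of mo X S)"
    by (simp add: openin_diff)
  ultimately show ?thesis
    unfolding loc_closed_def by (meson closedin_closure_of)
qed

lemma isolated_invariant_loc_closed:
  assumes "finite (topspace X)" "isolated_invariant X V S"
  shows "loc_closed X S"
proof -
  obtain N where N: "isolates X V N S"
    using assms(2) unfolding isolated_invariant_def by blast
  have "m \<in> S" if "a \<in> S" "a' \<in> S" "m \<in> X closure_of {a'}" "a \<in> X closure_of {m}" for a a' m
    using isolates_middle[OF N that(2,1)] that(3,4) unfolding PiV_def by blast
  moreover have "S \<subseteq> topspace X"
    using assms(2) unfolding isolated_invariant_def by blast
  ultimately show ?thesis
    using loc_closed_if_specialization_convex[OF assms(1)] by blast
qed

lemma subset_vhull: "A \<subseteq> vhull X V A"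
  unfolding vhull_def by (rule Inter_greatest) simp

lemma vhull_least:
  "S \<subseteq> topspace X \<Longrightarrow> compatible X V S \<Longrightarrow> loc_closed X S \<Longrightarrow> A \<subseteq> S \<Longrightarrow> vhull X V A \<subseteq> S"
  unfolding vhull_def by (rule Inter_lower) simp

lemma uim_minus_subset_alpha_lim: "uim_minus \<phi> \<subseteq> alpha_lim X V \<phi>"
  unfolding alpha_lim_def by (rule subset_vhull)

lemma uim_plus_subset_omega_lim: "uim_plus \<phi> \<subseteq> omega_lim X V \<phi>"
  unfolding omega_lim_def by (rule subset_vhull)

lemma PiV_subset_topspace:
  assumes "multivector_field X V"
  shows "PiV X V x \<subseteq> topspace X"
proof -
  have "cell V x \<subseteq> topspace X"
    using assms unfolding cell_def multivector_field_def by blast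
  then show ?thesis
    unfolding PiV_def using closure_of_subset_topspace[of X "{x}"] by (rule Un_least)
qed

definition down_closed :: "'p set \<Rightarrow> ('p \<times> 'p) set \<Rightarrow> 'p set \<Rightarrow> bool" where
  "down_closed P R J \<longleftrightarrow> J \<subseteq> P \<and> (\<forall>a\<in>P. \<forall>b\<in>J. (a, b) \<in> R \<longrightarrow> a \<in> J)"

lemma mem_MI_iff: "x \<in> MI X V M J \<longleftrightarrow> (\<exists>i\<in>J. \<exists>j\<in>J. x \<in> connection_set X V (M i) (M j))"
  by (simp add: MI_def)

lemma MI_mono: "J \<subseteq> J' \<Longrightarrow> MI X V M J \<subseteq> MI X V M J'"
  unfolding MI_def by blast

lemma MI_subset_topspace: "MI X V M J \<subseteq> topspace X"
proof
  fix x assume "x \<in> MI X V M J"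
  then obtain \<phi> where "ess_full_solution X V (topspace X) \<phi>" "\<phi> 0 = x"
    unfolding mem_MI_iff connection_set_def by blast
  then show "x \<in> topspace X"
    using ess_full_solution_range[of X V "topspace X" \<phi>] by auto
qed

locale morse_setting =
  fixes X :: "'a topology" and V :: "'a set set" and P :: "'p set"
    and R :: "('p \<times> 'p) set" and M :: "'p \<Rightarrow> 'a set"
  assumes finite_space: "finite (topspace X)"
    and mvf: "multivector_field X V"
    and invariant_space: "invariant X V (topspace X)"
    and partial_order: "partial_order_on P R"
    and morse: "morse_decomposition X V P R M"
begin

lemma R_refl: "p \<in> P \<Longrightarrow> (p, p) \<in> R"
  using partial_order_onD(1)[OF partial_order] by (rule refl_onD)

lemma R_trans: "(a, b) \<in> R \<Longrightarrow> (b, c) \<in> R \<Longrightarrow> (a, c) \<in> R"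
  using partial_order_onD(2)[OF partial_order] by (rule transD)

lemma morse_index_unique: "a \<in> P \<Longrightarrow> b \<in> P \<Longrightarrow> x \<in> M a \<Longrightarrow> x \<in> M b \<Longrightarrow> a = b"
  using morse unfolding morse_decomposition_def by blast

lemma isolated_invariant_morse_set: "p \<in> P \<Longrightarrow> isolated_invariant X V (M p)"
  using morse unfolding morse_decomposition_def by blast

lemma vhull_subset_morse_set:
  assumes "p \<in> P" "A \<subseteq> M p"
  shows "vhull X V A \<subseteq> M p"
  using isolated_invariant_morse_set[OF assms(1)] assms(2)
  by (intro vhull_least isolated_invariant_compatible[OF mvf]
      isolated_invariant_loc_closed[OF finite_space]) (auto simp: isolated_invariant_def)

lemma limits_in_morse_sets:
  assumes "ess_full_solution X V (topspace X) \<phi>"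
  obtains p q where "p \<in> P" "q \<in> P" "(p, q) \<in> R"
    "alpha_lim X V \<phi> \<subseteq> M q" "omega_lim X V \<phi> \<subseteq> M p"
proof -
  have "(\<exists>r\<in>P. range \<phi> \<subseteq> M r) \<or>
    (\<exists>p\<in>P. \<exists>q\<in>P. (p, q) \<in> R \<and> q \<noteq> p \<and> alpha_lim X V \<phi> \<subseteq> M q \<and> omega_lim X V \<phi> \<subseteq> M p)"
    using morse assms unfolding morse_decomposition_def by simp
  then consider r where "r \<in> P" "range \<phi> \<subseteq> M r"
    | p q where "p \<in> P" "q \<in> P" "(p, q) \<in> R" "alpha_lim X V \<phi> \<subseteq> M q" "omega_lim X V \<phi> \<subseteq> M p"
    by blast
  then show thesis
  proof cases
    case (1 r)
    have "alpha_lim X V \<phi> \<subseteq> M r" "omega_lim X V \<phi> \<subseteq> M r"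
      using order_trans[OF uim_minus_subset_range 1(2)] order_trans[OF uim_plus_subset_range 1(2)]
      unfolding alpha_lim_def omega_lim_def by (simp_all add: vhull_subset_morse_set 1(1))
    then show thesis
      by (rule that[OF 1(1) 1(1) R_refl[OF 1(1)]])
  qed (use that in blast)
qed

lemma ess_full_solution_through:
  assumes "y \<in> topspace X"
  obtains \<psi> where "ess_full_solution X V (topspace X) \<psi>" "\<psi> 0 = y"
proof -
  have "y \<in> Inv X V (topspace X)"
    using invariant_space assms by (simp add: invariant_def)
  then show thesis
    unfolding Inv_def using that by blast
qed

lemma finite_range_solution:
  assumes "ess_full_solution X V (topspace X) \<phi>"
  shows "finite (range \<phi>)"
  using ess_full_solution_range[OF assms] finite_space by (rule finite_subset)

lemma connection_order:
  assumes "x \<in> connection_set X V (M a) (M b)" "a \<in> P" "b \<in> P"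
  shows "(b, a) \<in> R"
proof -
  obtain \<phi> where ess: "ess_full_solution X V (topspace X) \<phi>"
    and alpha: "alpha_lim X V \<phi> \<subseteq> M a" and omega: "omega_lim X V \<phi> \<subseteq> M b"
    using assms(1) unfolding connection_set_def by blast
  obtain p q where pq: "p \<in> P" "q \<in> P" "(p, q) \<in> R"
    and alpha': "alpha_lim X V \<phi> \<subseteq> M q" and omega': "omega_lim X V \<phi> \<subseteq> M p"
    using limits_in_morse_sets[OF ess] .
  obtain u w where "u \<in> uim_minus \<phi>" "w \<in> uim_plus \<phi>"
    using uim_minus_nonempty[OF finite_range_solution[OF ess]]
      uim_plus_nonempty[OF finite_range_solution[OF ess]] by blast
  then have "u \<in> alpha_lim X V \<phi>" "w \<in> omega_lim X V \<phi>"
    using uim_minus_subset_alpha_lim uim_plus_subset_omega_lim by (metis subsetD)+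
  then have "a = q" "b = p"
    using morse_index_unique[OF assms(2) pq(2), of u] morse_index_unique[OF assms(3) pq(1), of w]
      alpha alpha' omega omega' by (simp_all add: subsetD)
  with pq(3) show ?thesis
    by simp
qed

lemma morse_set_subset_connection_set:
  assumes "q \<in> P"
  shows "M q \<subseteq> connection_set X V (M q) (M q)"
proof
  fix y assume "y \<in> M q"
  moreover have "Inv X V (M q) = M q" and M_topspace: "M q \<subseteq> topspace X"
    using isolated_invariant_morse_set[OF assms] unfolding isolated_invariant_def invariant_def by blast+
  ultimately obtain \<phi> where ess: "ess_full_solution X V (M q) \<phi>" and "\<phi> 0 = y"
    unfolding Inv_def by blast
  moreover have "alpha_lim X V \<phi> \<subseteq> M q" "omega_lim X V \<phi> \<subseteq> M q"
    using order_trans[OF uim_minus_subset_range ess_full_solution_range[OF ess]]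
      order_trans[OF uim_plus_subset_range ess_full_solution_range[OF ess]]
    unfolding alpha_lim_def omega_lim_def by (simp_all add: vhull_subset_morse_set assms)
  moreover have "ess_full_solution X V (topspace X) \<phi>"
    using ess_full_solution_mono[OF M_topspace ess] .
  ultimately show "y \<in> connection_set X V (M q) (M q)"
    unfolding connection_set_def by blast
qed

lemma MI_forward_closed:
  assumes "down_closed P R J" "x \<in> MI X V M J" "y \<in> PiV X V x"
  shows "y \<in> MI X V M J"
proof -
  obtain i j where ij: "i \<in> J" "j \<in> J" and "x \<in> connection_set X V (M i) (M j)"
    using assms(2) unfolding mem_MI_iff by blast
  then obtain \<phi> where \<phi>: "ess_full_solution X V (topspace X) \<phi>" "\<phi> 0 = x" "alpha_lim X V \<phi> \<subseteq> M i"
    unfolding connection_set_def by blast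
  obtain \<psi> where \<psi>: "ess_full_solution X V (topspace X) \<psi>" "\<psi> 0 = y"
    using ess_full_solution_through subsetD[OF PiV_subset_topspace[OF mvf] assms(3)] .
  obtain k where k: "k \<in> P" "omega_lim X V \<psi> \<subseteq> M k"
    using limits_in_morse_sets[OF \<psi>(1)] .
  have "omega_lim X V (shift (-1) \<psi>) \<subseteq> M k"
    using k(2) by (simp only: omega_lim_shift)
  moreover have "shift (-1) \<psi> (0 + 1) \<in> PiV X V (\<phi> 0)"
    using assms(3) \<phi>(2) \<psi>(2) by (simp add: shift_def)
  ultimately have "glue 0 \<phi> (shift (-1) \<psi>) 1 \<in> connection_set X V (M i) (M k)"
    by (rule glue_mem_connection_set[OF mvf \<phi>(1,3) ess_full_solution_shift[OF mvf \<psi>(1)]])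
  then have y: "y \<in> connection_set X V (M i) (M k)"
    using \<psi>(2) by (simp add: glue_def shift_def)
  have "J \<subseteq> P" and "\<And>a b. a \<in> P \<Longrightarrow> b \<in> J \<Longrightarrow> (a, b) \<in> R \<Longrightarrow> a \<in> J"
    using assms(1) unfolding down_closed_def by blast+
  then have "k \<in> J"
    using connection_order[OF y] k(1) ij(1) by blast
  with y ij(1) show ?thesis
    unfolding mem_MI_iff by blast
qed

lemma closedin_MI:
  assumes "down_closed P R J"
  shows "closedin X (MI X V M J)"
proof -
  have finite_MI: "finite (MI X V M J)"
    using finite_subset[OF MI_subset_topspace finite_space] .
  have "X closure_of MI X V M J \<subseteq> MI X V M J"
  proof
    fix y assume "y \<in> X closure_of MI X V M J"
    then obtain x where x: "x \<in> MI X V M J" "y \<in> X closure_of {x}"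
      unfolding closure_of_finite_eq_UN[OF finite_MI] by blast
    then have "y \<in> PiV X V x"
      by (simp add: PiV_def)
    with x(1) show "y \<in> MI X V M J"
      by (rule MI_forward_closed[OF assms])
  qed
  then show ?thesis
    using MI_subset_topspace[of X V M J] closure_of_subset_eq[of "MI X V M J" X] by blast
qed

lemma down_closed_down_le: "down_closed P R (down_le P R I)"
  unfolding down_closed_def
proof (intro conjI ballI impI)
  fix a b assume "a \<in> P" "b \<in> down_le P R I" "(a, b) \<in> R"
  then show "a \<in> down_le P R I"
    unfolding down_le_def by (blast intro: R_trans)
qed (simp add: down_le_def)

lemma down_closed_down_lt:
  assumes "convex_in P R I"
  shows "down_closed P R (down_lt P R I)"
  unfolding down_closed_def
proof (intro conjI ballI impI)
  show "down_lt P R I \<subseteq> P"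
    by (auto simp: down_lt_def down_le_def)
next
  fix a b assume a: "a \<in> P" and b: "b \<in> down_lt P R I" and ab: "(a, b) \<in> R"
  then obtain c where c: "c \<in> I" "(b, c) \<in> R" "b \<notin> I"
    unfolding down_lt_def down_le_def by blast
  have "a \<notin> I"
    using assms a b c ab unfolding convex_in_def down_lt_def down_le_def by blast
  with a c(1) R_trans[OF ab c(2)] show "a \<in> down_lt P R I"
    unfolding down_lt_def down_le_def by blast
qed

lemma subset_down_le: "I \<subseteq> P \<Longrightarrow> I \<subseteq> down_le P R I"
  unfolding down_le_def using R_refl by blast

lemma down_lt_subset_down_le: "down_lt P R I \<subseteq> down_le P R I"
  unfolding down_lt_def by blast

lemma morse_index_in_set:
  assumes "y \<in> MI X V M (down_le P R I) - MI X V M (down_lt P R I)" "q \<in> P" "y \<in> M q"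
  shows "q \<in> I"
proof (rule ccontr)
  assume "q \<notin> I"
  have y_q: "y \<in> connection_set X V (M q) (M q)"
    using morse_set_subset_connection_set[OF assms(2)] assms(3) by blast
  then obtain \<psi> where \<psi>: "ess_full_solution X V (topspace X) \<psi>" "\<psi> 0 = y" "omega_lim X V \<psi> \<subseteq> M q"
    unfolding connection_set_def by blast
  have "y \<in> MI X V M (down_le P R I)"
    using assms(1) by blast
  then obtain a b where a: "a \<in> down_le P R I" and "y \<in> connection_set X V (M a) (M b)"
    unfolding mem_MI_iff by blast
  then obtain \<phi> where \<phi>: "ess_full_solution X V (topspace X) \<phi>" "\<phi> 0 = y" "alpha_lim X V \<phi> \<subseteq> M a"
    unfolding connection_set_def by blast
  have y_aq: "y \<in> connection_set X V (M a) (M q)"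
    using mem_connection_set_through[OF mvf \<phi> \<psi>] .
  obtain c where c: "a \<in> P" "c \<in> I" "(a, c) \<in> R"
    using a unfolding down_le_def by blast
  have "(q, c) \<in> R"
    using R_trans[OF connection_order[OF y_aq c(1) assms(2)] c(3)] .
  with assms(2) c(2) \<open>q \<notin> I\<close> have "q \<in> down_lt P R I"
    unfolding down_lt_def down_le_def by blast
  with y_q have "y \<in> MI X V M (down_lt P R I)"
    unfolding mem_MI_iff by blast
  with assms(1) show False
    by blast
qed

lemma connection_set_subset_down_diff:
  assumes "I \<subseteq> P" "convex_in P R I" "i \<in> I" "j \<in> I"
  shows "connection_set X V (M i) (M j) \<subseteq> MI X V M (down_le P R I) - MI X V M (down_lt P R I)"
proof
  fix x assume x: "x \<in> connection_set X V (M i) (M j)"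
  show "x \<in> MI X V M (down_le P R I) - MI X V M (down_lt P R I)"
  proof
    show "x \<in> MI X V M (down_le P R I)"
      using x assms(3,4) subset_down_le[OF assms(1)] unfolding mem_MI_iff by blast
  next
    show "x \<notin> MI X V M (down_lt P R I)"
    proof
      assume "x \<in> MI X V M (down_lt P R I)"
      then obtain a b where a: "a \<in> down_lt P R I" and "x \<in> connection_set X V (M a) (M b)"
        unfolding mem_MI_iff by blast
      then obtain \<psi> where "ess_full_solution X V (topspace X) \<psi>" "\<psi> 0 = x" "alpha_lim X V \<psi> \<subseteq> M a"
        unfolding connection_set_def by blast
      moreover obtain \<phi> where "ess_full_solution X V (topspace X) \<phi>" "\<phi> 0 = x" "omega_lim X V \<phi> \<subseteq> M j"
        using x unfolding connection_set_def by blast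
      ultimately have x_aj: "x \<in> connection_set X V (M a) (M j)"
        by (rule mem_connection_set_through[OF mvf])
      obtain c where c: "a \<in> P" "c \<in> I" "(a, c) \<in> R" "a \<notin> I"
        using a unfolding down_lt_def down_le_def by blast
      have "(j, a) \<in> R"
        using connection_order[OF x_aj c(1)] assms(1,4) by blast
      with assms(2,4) c show False
        unfolding convex_in_def by blast
    qed
  qed
qed

lemma MI_subset_Inv_down_diff:
  assumes "I \<subseteq> P" "convex_in P R I"
  shows "MI X V M I \<subseteq> Inv X V (MI X V M (down_le P R I) - MI X V M (down_lt P R I))"
proof
  fix x assume "x \<in> MI X V M I"
  then obtain i j \<phi> where ij: "i \<in> I" "j \<in> I" and \<phi>: "ess_full_solution X V (topspace X) \<phi>"
    "\<phi> 0 = x" "alpha_lim X V \<phi> \<subseteq> M i" "omega_lim X V \<phi> \<subseteq> M j"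
    unfolding mem_MI_iff connection_set_def by blast
  have "range \<phi> \<subseteq> MI X V M (down_le P R I) - MI X V M (down_lt P R I)"
    using mem_connection_set_shift[OF mvf \<phi>(1,3,4)] connection_set_subset_down_diff[OF assms ij]
    by blast
  with \<phi>(1,2) show "x \<in> Inv X V (MI X V M (down_le P R I) - MI X V M (down_lt P R I))"
    unfolding Inv_def using ess_full_solution_restrict by blast
qed

lemma Inv_down_diff_subset_MI:
  "Inv X V (MI X V M (down_le P R I) - MI X V M (down_lt P R I)) \<subseteq> MI X V M I"
proof
  let ?N = "MI X V M (down_le P R I) - MI X V M (down_lt P R I)"
  fix x assume "x \<in> Inv X V ?N"
  then obtain \<phi> where \<phi>_N: "ess_full_solution X V ?N \<phi>" and "\<phi> 0 = x"
    unfolding Inv_def by blast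
  have "?N \<subseteq> topspace X"
    using MI_subset_topspace[of X V M "down_le P R I"] by blast
  then have \<phi>: "ess_full_solution X V (topspace X) \<phi>"
    using \<phi>_N by (rule ess_full_solution_mono)
  obtain p q where pq: "p \<in> P" "q \<in> P" "(p, q) \<in> R"
    and alpha: "alpha_lim X V \<phi> \<subseteq> M q" and omega: "omega_lim X V \<phi> \<subseteq> M p"
    using limits_in_morse_sets[OF \<phi>] .
  obtain u w where u: "u \<in> uim_minus \<phi>" and w: "w \<in> uim_plus \<phi>"
    using uim_minus_nonempty[OF finite_range_solution[OF \<phi>]]
      uim_plus_nonempty[OF finite_range_solution[OF \<phi>]] by blast
  have "q \<in> I"
  proof (rule morse_index_in_set[OF _ pq(2)])
    show "u \<in> ?N"
      using ess_full_solution_range[OF \<phi>_N] subsetD[OF uim_minus_subset_range u] by (rule subsetD)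
    show "u \<in> M q"
      using alpha subsetD[OF uim_minus_subset_alpha_lim u] by (rule subsetD)
  qed
  moreover have "p \<in> I"
  proof (rule morse_index_in_set[OF _ pq(1)])
    show "w \<in> ?N"
      using ess_full_solution_range[OF \<phi>_N] subsetD[OF uim_plus_subset_range w] by (rule subsetD)
    show "w \<in> M p"
      using omega subsetD[OF uim_plus_subset_omega_lim w] by (rule subsetD)
  qed
  moreover have "x \<in> connection_set X V (M q) (M p)"
    using \<phi> \<open>\<phi> 0 = x\<close> alpha omega unfolding connection_set_def by blast
  ultimately show "x \<in> MI X V M I"
    unfolding mem_MI_iff by blast
qed

end

theorem theorem7p7:
  fixes X :: "'a topology" and V :: "'a set set"
    and P :: "'p set" and R :: "('p \<times> 'p) set" and M :: "'p \<Rightarrow> 'a set" and I :: "'p set"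
  assumes "finite (topspace X)" and "t0_space X"
    and "multivector_field X V"
    and "invariant X V (topspace X)"
    and "finite P" and "partial_order_on P R"
    and "morse_decomposition X V P R M"
    and "I \<subseteq> P" and "convex_in P R I"
  shows "index_pair X V (MI X V M (down_le P R I)) (MI X V M (down_lt P R I)) (MI X V M I)"
proof -
  interpret morse_setting X V P R M
    using assms(1,3,4,6,7) by unfold_locales
  have le: "down_closed P R (down_le P R I)"
    by (rule down_closed_down_le)
  have lt: "down_closed P R (down_lt P R I)"
    using assms(9) by (rule down_closed_down_lt)
  have "MI X V M I = Inv X V (MI X V M (down_le P R I) - MI X V M (down_lt P R I))"
    using MI_subset_Inv_down_diff[OF assms(8,9)] Inv_down_diff_subset_MI by (rule subset_antisym)
  moreover have "MI X V M (down_lt P R I) \<subseteq> MI X V M (down_le P R I)"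
    by (rule MI_mono[OF down_lt_subset_down_le])
  moreover have "\<forall>x\<in>MI X V M (down_lt P R I). \<forall>y\<in>PiV X V x \<inter> MI X V M (down_le P R I).
      y \<in> MI X V M (down_lt P R I)"
    using MI_forward_closed[OF lt] by blast
  moreover have "\<forall>x\<in>MI X V M (down_le P R I). PiV X V x - MI X V M (down_le P R I) = {}"
    using MI_forward_closed[OF le] by blast
  ultimately show ?thesis
    unfolding index_pair_def using closedin_MI[OF le] closedin_MI[OF lt] by blast
qed

end
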